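(* For every graph $G$, $\psi(G)\le\gamma_M(G)+\gamma(G)$.
   Context: All graphs are finite, simple, undirected and connected, with at least 2 vertices; $d(u,v)$ is the shortest-path distance. A set $S\subseteq V(G)$ is resolving if for all distinct $x,y$ there is $u\in S$ with $d(u,x)\ne d(u,y)$. $S$ is dominating if every vertex not in $S$ has a neighbor in $S$; $\gamma(G)$ is its minimum size. An MLD-set is a set both resolving and dominating; $\gamma_M(G)$ is its minimum size. A doubly resolving set is a set $S$ such that for every pair of distinct vertices $x,y$ there are $u,v\in S$ with $d(u,x)-d(u,y)\ne d(v,x)-d(v,y)$; $\psi(G)$ is its minimum size. *)

theory Defs
  imports Main
begin

fun walk :: "('a \<Rightarrow> 'a \<Rightarrow> bool) \<Rightarrow> 'a list \<Rightarrow> bool" where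
  "walk E [] = False"
| "walk E [x] = True"
| "walk E (x # y # xs) = (E x y \<and> walk E (y # xs))"

definition conn_graph :: "'a set \<Rightarrow> ('a \<Rightarrow> 'a \<Rightarrow> bool) \<Rightarrow> bool" where
  "conn_graph V E \<longleftrightarrow> finite V \<and> card V \<ge> 2
     \<and> (\<forall>x y. E x y \<longrightarrow> x \<in> V \<and> y \<in> V)
     \<and> (\<forall>x y. E x y \<longrightarrow> E y x)
     \<and> (\<forall>x. \<not> E x x)
     \<and> (\<forall>x\<in>V. \<forall>y\<in>V. \<exists>p. walk E p \<and> hd p = x \<and> last p = y)"

definition gdist :: "('a \<Rightarrow> 'a \<Rightarrow> bool) \<Rightarrow> 'a \<Rightarrow> 'a \<Rightarrow> nat" where
  "gdist E x y = (LEAST n. \<exists>p. walk E p \<and> hd p = x \<and> last p = y \<and> length p = Suc n)"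

definition resolving :: "'a set \<Rightarrow> ('a \<Rightarrow> 'a \<Rightarrow> bool) \<Rightarrow> 'a set \<Rightarrow> bool" where
  "resolving V E S \<longleftrightarrow> S \<subseteq> V \<and>
     (\<forall>x\<in>V. \<forall>y\<in>V. x \<noteq> y \<longrightarrow> (\<exists>u\<in>S. gdist E u x \<noteq> gdist E u y))"

definition dominating :: "'a set \<Rightarrow> ('a \<Rightarrow> 'a \<Rightarrow> bool) \<Rightarrow> 'a set \<Rightarrow> bool" where
  "dominating V E S \<longleftrightarrow> S \<subseteq> V \<and> (\<forall>x\<in>V - S. \<exists>u\<in>S. E x u)"

definition doubly_resolving :: "'a set \<Rightarrow> ('a \<Rightarrow> 'a \<Rightarrow> bool) \<Rightarrow> 'a set \<Rightarrow> bool" where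
  "doubly_resolving V E S \<longleftrightarrow> S \<subseteq> V \<and>
     (\<forall>x\<in>V. \<forall>y\<in>V. x \<noteq> y \<longrightarrow> (\<exists>u\<in>S. \<exists>v\<in>S.
        int (gdist E u x) - int (gdist E u y) \<noteq> int (gdist E v x) - int (gdist E v y)))"

definition domination_number :: "'a set \<Rightarrow> ('a \<Rightarrow> 'a \<Rightarrow> bool) \<Rightarrow> nat" where
  "domination_number V E = (LEAST k. \<exists>S. dominating V E S \<and> card S = k)"

definition mld_number :: "'a set \<Rightarrow> ('a \<Rightarrow> 'a \<Rightarrow> bool) \<Rightarrow> nat" where
  "mld_number V E = (LEAST k. \<exists>S. resolving V E S \<and> dominating V E S \<and> card S = k)"

definition doubly_resolving_number :: "'a set \<Rightarrow> ('a \<Rightarrow> 'a \<Rightarrow> bool) \<Rightarrow> nat" where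
  "doubly_resolving_number V E = (LEAST k. \<exists>S. doubly_resolving V E S \<and> card S = k)"

end

theory Submission
  imports Defs
begin

text \<open>Let \<open>S\<close> be a minimum MLD-set and \<open>D\<close> a minimum dominating set. For every
\<open>y \<in> S \<inter> D\<close> add one vertex \<open>x\<close> lying exactly one step farther than \<open>y\<close> from every
vertex of \<open>S \<union> D\<close>, if there is one; the result has at most \<open>|S| + |D|\<close> elements.
If it failed to doubly resolve \<open>x, y\<close>, then \<open>d(u,x) = d(u,y) + c\<close> on it for a constant
\<open>c \<noteq> 0\<close> (as \<open>S\<close> resolves), and by symmetry \<open>c > 0\<close>. A neighbour of \<open>x\<close> in \<open>S\<close> (resp. \<open>D\<close>) is then
strictly closer to \<open>y\<close> than to \<open>x\<close>, so it is \<open>y\<close> itself and \<open>c = 1\<close>. Thus \<open>y \<in> S \<inter> D\<close>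
and \<open>x\<close> is a candidate for \<open>y\<close>; the vertex added for \<open>y\<close> has the same distances to
\<open>S\<close> as \<open>x\<close> but is different from \<open>x\<close>, contradicting that \<open>S\<close> resolves.\<close>

lemma gdist_self: "gdist E u u = 0"
proof -
  have "\<exists>p. walk E p \<and> hd p = u \<and> last p = u \<and> length p = Suc 0"
    by (rule exI[of _ "[u]"]) simp
  then have "gdist E u u \<le> 0" unfolding gdist_def by (rule Least_le)
  then show ?thesis by simp
qed

lemma gdist_le_1_if_adjacent: "E u v \<Longrightarrow> gdist E u v \<le> 1"
proof -
  assume "E u v"
  then have "\<exists>p. walk E p \<and> hd p = u \<and> last p = v \<and> length p = Suc 1"
    by (intro exI[of _ "[u, v]"]) simp
  then show ?thesis unfolding gdist_def by (rule Least_le)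
qed

lemma gdist_eq_0_imp_eq:
  assumes "conn_graph V E" "u \<in> V" "v \<in> V" "gdist E u v = 0"
  shows "u = v"
proof -
  obtain p where "walk E p" "hd p = u" "last p = v"
    using assms(1-3) unfolding conn_graph_def by blast
  then have "\<exists>n p. walk E p \<and> hd p = u \<and> last p = v \<and> length p = Suc n"
    by (metis Suc_pred length_greater_0_conv walk.simps(1))
  from LeastI_ex[OF this] assms(4) obtain q
    where "walk E q" "hd q = u" "last q = v" "length q = Suc 0"
    unfolding gdist_def by auto
  then show ?thesis by (cases q) auto
qed

lemma conn_graph_adjacent_sym: "conn_graph V E \<Longrightarrow> E x y \<Longrightarrow> E y x"
  unfolding conn_graph_def by simp

lemma conn_graph_adjacent_in_vertices: "conn_graph V E \<Longrightarrow> E x y \<Longrightarrow> x \<in> V \<and> y \<in> V"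
  unfolding conn_graph_def by simp

lemma neighbour_closer_to_other_vertex_eq:
  assumes "conn_graph V E" "E x s" "y \<in> V" "gdist E s y < gdist E s x"
  shows "s = y"
proof -
  have "s \<in> V" using conn_graph_adjacent_in_vertices[OF assms(1,2)] by simp
  have "gdist E s x \<le> 1"
    using gdist_le_1_if_adjacent[of E s x] conn_graph_adjacent_sym[OF assms(1,2)] by simp
  then have "gdist E s y = 0" using assms(4) by simp
  then show ?thesis using gdist_eq_0_imp_eq[OF assms(1) \<open>s \<in> V\<close> assms(3)] by simp
qed

lemma resolving_self:
  assumes "conn_graph V E"
  shows "resolving V E V"
  unfolding resolving_def
proof (intro conjI ballI impI)
  fix x y assume "x \<in> V" "y \<in> V" "x \<noteq> y"
  then have "gdist E x y \<noteq> gdist E x x"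
    using gdist_eq_0_imp_eq[OF assms] gdist_self by metis
  then show "\<exists>u\<in>V. gdist E u x \<noteq> gdist E u y" using \<open>x \<in> V\<close> by metis
qed simp

lemma dominating_self: "dominating V E V"
  unfolding dominating_def by simp

lemma card_Un_image_Int_le:
  assumes "finite A" "finite B"
  shows "card (A \<union> B \<union> f ` (A \<inter> B)) \<le> card A + card B"
proof -
  have "card (A \<union> B \<union> f ` (A \<inter> B)) \<le> card (A \<union> B) + card (f ` (A \<inter> B))"
    by (rule card_Un_le)
  also have "\<dots> \<le> card (A \<union> B) + card (A \<inter> B)"
    using assms by (simp add: card_image_le)
  also have "\<dots> = card A + card B"
    using card_Un_Int[OF assms] by simp
  finally show ?thesis .
qed

definition shifted :: "('a \<Rightarrow> 'a \<Rightarrow> bool) \<Rightarrow> 'a set \<Rightarrow> 'a \<Rightarrow> 'a \<Rightarrow> bool" where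
  "shifted E W y x \<longleftrightarrow> (\<forall>u\<in>W. gdist E u x = gdist E u y + 1)"

definition shift_vertex :: "'a set \<Rightarrow> ('a \<Rightarrow> 'a \<Rightarrow> bool) \<Rightarrow> 'a set \<Rightarrow> 'a \<Rightarrow> 'a" where
  "shift_vertex V E W y =
     (if \<exists>x\<in>V. shifted E W y x then SOME x. x \<in> V \<and> shifted E W y x else y)"

lemma shift_vertex_in_vertices: "y \<in> V \<Longrightarrow> shift_vertex V E W y \<in> V"
  unfolding shift_vertex_def using someI_ex[of "\<lambda>x. x \<in> V \<and> shifted E W y x"] by auto

lemma shift_vertex_shifted:
  "x \<in> V \<Longrightarrow> shifted E W y x \<Longrightarrow> shifted E W y (shift_vertex V E W y)"
  unfolding shift_vertex_def by (auto intro: someI2_ex)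

lemma constant_positive_shift_impossible:
  assumes G: "conn_graph V E"
    and S: "resolving V E S" "dominating V E S"
    and D: "dominating V E D"
    and T: "T = S \<union> D \<union> shift_vertex V E (S \<union> D) ` (S \<inter> D)"
    and xy: "x \<in> V" "y \<in> V"
    and shift: "c > 0" "\<forall>u\<in>T. gdist E u x = gdist E u y + c"
  shows False
proof -
  have "x \<notin> T"
    using shift gdist_self[of E x] by fastforce
  have target: "s = y \<and> c = 1" if "s \<in> T" "E x s" for s
  proof -
    have "gdist E s x = gdist E s y + c" using shift that(1) by blast
    then have "s = y"
      using neighbour_closer_to_other_vertex_eq[OF G that(2) xy(2)] shift(1) by linarith
    moreover have "gdist E y x \<le> 1"
      using gdist_le_1_if_adjacent[of E s x] conn_graph_adjacent_sym[OF G that(2)] \<open>s = y\<close>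
      by simp
    ultimately show ?thesis using \<open>gdist E s x = gdist E s y + c\<close> shift(1) gdist_self
      by simp
  qed
  obtain s d where "s \<in> S" "E x s" "d \<in> D" "E x d"
    using S(2) D \<open>x \<notin> T\<close> T xy(1) unfolding dominating_def by blast
  then have "y \<in> S \<inter> D" "c = 1" using target T by blast+
  then have "shifted E (S \<union> D) y x"
    using shift(2) T unfolding shifted_def by simp
  define z where "z = shift_vertex V E (S \<union> D) y"
  have "z \<in> V" "shifted E (S \<union> D) y z"
    unfolding z_def using shift_vertex_in_vertices shift_vertex_shifted xy
      \<open>shifted E (S \<union> D) y x\<close> by metis+
  have "z \<noteq> x" using \<open>x \<notin> T\<close> \<open>y \<in> S \<inter> D\<close> T z_def by blast
  then obtain u where "u \<in> S" "gdist E u x \<noteq> gdist E u z"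
    using S(1) xy(1) \<open>z \<in> V\<close> unfolding resolving_def by metis
  then show False
    using \<open>shifted E (S \<union> D) y x\<close> \<open>shifted E (S \<union> D) y z\<close> unfolding shifted_def by simp
qed

lemma doubly_resolving_extension:
  assumes G: "conn_graph V E"
    and S: "resolving V E S" "dominating V E S"
    and D: "dominating V E D"
  shows "doubly_resolving V E (S \<union> D \<union> shift_vertex V E (S \<union> D) ` (S \<inter> D))"
    (is "doubly_resolving V E ?T")
  unfolding doubly_resolving_def
proof (intro conjI ballI impI)
  have "S \<subseteq> V" "D \<subseteq> V" using S(2) D unfolding dominating_def by simp_all
  then show "?T \<subseteq> V" by (auto intro: shift_vertex_in_vertices)
  fix x y assume xy: "x \<in> V" "y \<in> V" "x \<noteq> y"
  show "\<exists>u\<in>?T. \<exists>v\<in>?T. int (gdist E u x) - int (gdist E u y) \<noteq> int (gdist E v x) - int (gdist E v y)"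
  proof (rule ccontr)
    assume const: "\<not> ?thesis"
    obtain u0 where "u0 \<in> S" "gdist E u0 x \<noteq> gdist E u0 y"
      using S(1) xy unfolding resolving_def by blast
    define c where "c = int (gdist E u0 x) - int (gdist E u0 y)"
    have "c \<noteq> 0" using \<open>gdist E u0 x \<noteq> gdist E u0 y\<close> unfolding c_def by simp
    have all: "int (gdist E u x) = int (gdist E u y) + c" if "u \<in> ?T" for u
    proof -
      have "u0 \<in> ?T" using \<open>u0 \<in> S\<close> by blast
      then have "int (gdist E u x) - int (gdist E u y) = c"
        using const that unfolding c_def by blast
      then show ?thesis by linarith
    qed
    consider "c > 0" | "c < 0" using \<open>c \<noteq> 0\<close> by linarith
    then show False
    proof cases
      case 1
      have "\<forall>u\<in>?T. gdist E u x = gdist E u y + nat c"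
      proof
        fix u assume "u \<in> ?T"
        from all[OF this] 1 show "gdist E u x = gdist E u y + nat c" by arith
      qed
      moreover have "nat c > 0" using 1 by simp
      ultimately show False
        using constant_positive_shift_impossible[OF G S D refl xy(1,2)] by blast
    next
      case 2
      have "\<forall>u\<in>?T. gdist E u y = gdist E u x + nat (- c)"
      proof
        fix u assume "u \<in> ?T"
        from all[OF this] 2 show "gdist E u y = gdist E u x + nat (- c)" by arith
      qed
      moreover have "nat (- c) > 0" using 2 by simp
      ultimately show False
        using constant_positive_shift_impossible[OF G S D refl xy(2,1)] by blast
    qed
  qed
qed

theorem theorem12:
  assumes "conn_graph V E"
  shows "doubly_resolving_number V E \<le> mld_number V E + domination_number V E"
proof -
  obtain S where S: "resolving V E S" "dominating V E S" "card S = mld_number V E"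
    using LeastI_ex[of "\<lambda>k. \<exists>S. resolving V E S \<and> dominating V E S \<and> card S = k"]
      resolving_self[OF assms] dominating_self
    unfolding mld_number_def by blast
  obtain D where D: "dominating V E D" "card D = domination_number V E"
    using LeastI_ex[of "\<lambda>k. \<exists>S. dominating V E S \<and> card S = k"] dominating_self
    unfolding domination_number_def by blast
  let ?T = "S \<union> D \<union> shift_vertex V E (S \<union> D) ` (S \<inter> D)"
  have "finite S" "finite D"
    using assms S(2) D(1) finite_subset unfolding conn_graph_def dominating_def by blast+
  have "doubly_resolving_number V E \<le> card ?T"
    unfolding doubly_resolving_number_def
    using doubly_resolving_extension[OF assms S(1,2) D(1)] by (intro Least_le) blast
  also have "\<dots> \<le> card S + card D"
    using card_Un_image_Int_le \<open>finite S\<close> \<open>finite D\<close> by blast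
  finally show ?thesis using S(3) D(2) by simp
qed

end
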